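(* Let $(X_i, X_j)$ be jointly Gaussian with standard normal marginals and correlation $\rho_{ij}$. Let $k, g \ge 2$ be integers and let $S_{i0} < S_{i1} < \dots < S_{i(k-2)}$ and $S_{j0} < S_{j1} < \dots < S_{j(g-2)}$ be real cutoffs; set $S_{i(-1)} = S_{j(-1)} = -\infty$ and $S_{i(k-1)} = S_{j(g-1)} = +\infty$. Define discrete variables $V_i \in \{0,\dots,k-1\}$ and $V_j \in \{0,\dots,g-1\}$ by $V_i = c$ iff $S_{i(c-1)} < X_i \le S_{ic}$ and $V_j = d$ iff $S_{j(d-1)} < X_j \le S_{jd}$. Then $$\mathrm{Cov}(V_i, V_j) = \sum_{c_i=0}^{k-2}\sum_{c_j=0}^{g-2}\Big[\Psi(S_{ic_i}, S_{jc_j}, \rho_{ij}) - \Psi(S_{ic_i}, S_{jc_j}, 0)\Big],$$ where $\Psi(u,v,\rho)$ denotes the cumulative distribution function, evaluated at $(u,v)$, of the standard bivariate normal distribution with correlation $\rho$.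
   Context: $V_i$ and $V_j$ are obtained by "linear discretization" of the standard Gaussian variables $X_i$ and $X_j$, i.e., by partitioning the real line with increasing cutoffs and labeling the intervals $0,1,2,\dots$ from left to right. *)

theory Defs
  imports "HOL-Probability.Probability"
begin

definition std_normal_measure :: "real measure" where
  "std_normal_measure = density lborel (\<lambda>x. ennreal (std_normal_density x))"

text \<open>For |rho| < 1 this is the measure with the usual bivariate normal density;
  for rho = +-1 it is the degenerate Gaussian law.\<close>
definition bivariate_std_normal :: "real \<Rightarrow> (real \<times> real) measure" where
  "bivariate_std_normal rho =
     distr (std_normal_measure \<Otimes>\<^sub>M std_normal_measure) (borel \<Otimes>\<^sub>M borel)
       (\<lambda>(z1, z2). (z1, rho * z1 + sqrt (1 - rho\<^sup>2) * z2))"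

definition Psi :: "real \<Rightarrow> real \<Rightarrow> real \<Rightarrow> real" where
  "Psi u v rho = measure (bivariate_std_normal rho) ({..u} \<times> {..v})"

definition covariance :: "'a measure \<Rightarrow> ('a \<Rightarrow> real) \<Rightarrow> ('a \<Rightarrow> real) \<Rightarrow> real" where
  "covariance M X Y =
     (\<integral>\<omega>. (X \<omega> - (\<integral>\<eta>. X \<eta> \<partial>M)) * (Y \<omega> - (\<integral>\<eta>. Y \<eta> \<partial>M)) \<partial>M)"

definition cutoff :: "nat \<Rightarrow> (nat \<Rightarrow> real) \<Rightarrow> int \<Rightarrow> ereal" where
  "cutoff k S c = (if c \<le> -1 then -\<infinity> else if c \<ge> int k - 1 then \<infinity> else ereal (S (nat c)))"

end

theory Submission
  imports Defs
begin

text \<open>The category of X is the number of cutoffs strictly below X, i.e. a sum of indicators of the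
  upper tails {X > S c}. Covariance being bilinear, Cov(V_i, V_j) is the sum over all pairs of
  cutoffs of P(X_i > a, X_j > b) - P(X_i > a) P(X_j > b). Passing to complements does not change
  this quantity, which becomes Psi(a, b, rho) - Phi(a) Phi(b); finally Phi(a) Phi(b) = Psi(a, b, 0),
  because for rho = 0 the bivariate normal law is the product of its standard normal marginals.\<close>

abbreviation std_normal_pair :: "(real \<times> real) measure" where
  "std_normal_pair \<equiv> std_normal_measure \<Otimes>\<^sub>M std_normal_measure"

lemma prob_space_std_normal_measure: "prob_space std_normal_measure"
  unfolding std_normal_measure_def by (rule prob_space_normal_density) simp

lemma sets_std_normal_measure [simp, measurable_cong]: "sets std_normal_measure = sets borel"
  by (simp add: std_normal_measure_def)

lemma space_std_normal_measure [simp]: "space std_normal_measure = UNIV"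
  by (simp add: std_normal_measure_def)

lemma distributed_std_normal_iff:
  assumes "Z \<in> borel_measurable M"
  shows "distributed M lborel Z std_normal_density \<longleftrightarrow> distr M borel Z = std_normal_measure"
proof -
  have "distr M lborel Z = distr M borel Z"
    by (rule distr_cong) simp_all
  then show ?thesis
    using assms by (simp add: distributed_def std_normal_measure_def)
qed

interpretation std_normal_pair: pair_prob_space std_normal_measure std_normal_measure
  by (intro pair_prob_space.intro pair_sigma_finite.intro prob_space_imp_sigma_finite
      prob_space_std_normal_measure)

lemma sets_std_normal_pair [simp, measurable_cong]:
  "sets std_normal_pair = sets (borel \<Otimes>\<^sub>M borel)"
  by (intro sets_pair_measure_cong) simp_all

lemma distr_std_normal_pair_fst: "distr std_normal_pair borel fst = std_normal_measure"
proof -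
  have "distr std_normal_pair borel fst = distr std_normal_pair std_normal_measure fst"
    by (rule distr_cong) simp_all
  then show ?thesis
    using prob_space.distr_pair_fst[OF prob_space_std_normal_measure] by simp
qed

lemma distr_std_normal_pair_snd: "distr std_normal_pair borel snd = std_normal_measure"
proof -
  have "distr std_normal_pair borel snd =
      distr (distr std_normal_pair std_normal_pair (\<lambda>(x, y). (y, x))) borel snd"
    using std_normal_pair.distr_pair_swap by simp
  also have "\<dots> = distr std_normal_pair borel (snd \<circ> (\<lambda>(x, y). (y, x)))"
    by (rule distr_distr) (simp_all add: measurable_pair_swap')
  also have "\<dots> = distr std_normal_pair borel fst"
    by (rule distr_cong) auto
  finally show ?thesis
    using distr_std_normal_pair_fst by simp
qed

lemma indep_var_std_normal_pair: "std_normal_pair.indep_var borel fst borel snd"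
proof -
  have "distr std_normal_pair (borel \<Otimes>\<^sub>M borel) (\<lambda>z. (fst z, snd z)) = std_normal_pair"
    by (simp add: distr_id2)
  then show ?thesis
    by (simp add: std_normal_pair.indep_var_distribution_eq
        distr_std_normal_pair_fst distr_std_normal_pair_snd)
qed

lemma distr_std_normal_pair_lincomb:
  assumes "a\<^sup>2 + b\<^sup>2 = 1"
  shows "distr std_normal_pair borel (\<lambda>z. a * fst z + b * snd z) = std_normal_measure"
proof -
  have std_fst: "distributed std_normal_pair lborel fst std_normal_density"
    by (simp add: distributed_std_normal_iff distr_std_normal_pair_fst)
  have std_snd: "distributed std_normal_pair lborel snd std_normal_density"
    by (simp add: distributed_std_normal_iff distr_std_normal_pair_snd)
  \<comment> \<open>The library's Gaussian convolution lemma needs positive variances, so a vanishing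
    coefficient is treated separately.\<close>
  have "distributed std_normal_pair lborel (\<lambda>z. a * fst z + b * snd z) std_normal_density"
  proof (cases "a = 0 \<or> b = 0")
    case True
    then consider "a = 0" "\<bar>b\<bar> = 1" | "b = 0" "\<bar>a\<bar> = 1"
      using assms by (auto simp: power2_eq_1_iff)
    then show ?thesis
    proof cases
      case 1
      then show ?thesis
        using std_normal_pair.normal_density_affine[OF std_snd, of b 0] by auto
    next
      case 2
      then show ?thesis
        using std_normal_pair.normal_density_affine[OF std_fst, of a 0] by auto
    qed
  next
    case False
    have "std_normal_pair.indep_var borel ((*) a \<circ> fst) borel ((*) b \<circ> snd)"
      by (rule std_normal_pair.indep_var_compose[OF indep_var_std_normal_pair]) simp_all
    moreover have "distributed std_normal_pair lborel (\<lambda>z. a * fst z) (normal_density 0 \<bar>a\<bar>)"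
      using std_normal_pair.normal_density_affine[OF std_fst, of a 0] False by simp
    moreover have "distributed std_normal_pair lborel (\<lambda>z. b * snd z) (normal_density 0 \<bar>b\<bar>)"
      using std_normal_pair.normal_density_affine[OF std_snd, of b 0] False by simp
    ultimately have "distributed std_normal_pair lborel (\<lambda>z. a * fst z + b * snd z)
        (normal_density (0 + 0) (sqrt (\<bar>a\<bar>\<^sup>2 + \<bar>b\<bar>\<^sup>2)))"
      using False by (intro std_normal_pair.add_indep_normal) (simp_all add: comp_def)
    then show ?thesis
      using assms by simp
  qed
  then show ?thesis
    by (simp add: distributed_std_normal_iff)
qed

lemma bivariate_std_normal_0: "bivariate_std_normal 0 = std_normal_pair"
  unfolding bivariate_std_normal_def by (simp add: case_prod_beta' distr_id2)

lemma distr_bivariate_std_normal: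
  assumes [measurable]: "f \<in> borel_measurable (borel \<Otimes>\<^sub>M borel)"
  shows "distr (bivariate_std_normal rho) borel f =
    distr std_normal_pair borel (\<lambda>z. f (fst z, rho * fst z + sqrt (1 - rho\<^sup>2) * snd z))"
proof -
  have "(\<lambda>(z1, z2). (z1, rho * z1 + sqrt (1 - rho\<^sup>2) * z2))
      \<in> measurable std_normal_pair (borel \<Otimes>\<^sub>M borel)"
    by (subst measurable_cong_sets[OF sets_std_normal_pair refl]) measurable
  then have "distr (bivariate_std_normal rho) borel f =
      distr std_normal_pair borel (f \<circ> (\<lambda>(z1, z2). (z1, rho * z1 + sqrt (1 - rho\<^sup>2) * z2)))"
    unfolding bivariate_std_normal_def by (rule distr_distr[OF assms])
  then show ?thesis
    by (simp add: comp_def case_prod_beta')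
qed

lemma distr_bivariate_std_normal_fst: "distr (bivariate_std_normal rho) borel fst = std_normal_measure"
  by (simp add: distr_bivariate_std_normal distr_std_normal_pair_fst)

lemma distr_bivariate_std_normal_snd:
  assumes "\<bar>rho\<bar> \<le> 1"
  shows "distr (bivariate_std_normal rho) borel snd = std_normal_measure"
proof -
  have "rho\<^sup>2 + (sqrt (1 - rho\<^sup>2))\<^sup>2 = 1"
    using assms by (simp add: abs_square_le_1)
  then show ?thesis
    by (simp add: distr_bivariate_std_normal distr_std_normal_pair_lincomb)
qed

lemma Psi_0: "Psi u v 0 = measure std_normal_measure {..u} * measure std_normal_measure {..v}"
  using sigma_finite_measure.emeasure_pair_measure_Times
      [OF prob_space_imp_sigma_finite[OF prob_space_std_normal_measure],
       of "{..u}" std_normal_measure "{..v}"]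
  by (simp add: Psi_def bivariate_std_normal_0 measure_def enn2real_mult)

lemma distr_fst_of_joint:
  assumes "X \<in> borel_measurable M" "Y \<in> borel_measurable M"
    and "distr M (borel \<Otimes>\<^sub>M borel) (\<lambda>\<omega>. (X \<omega>, Y \<omega>)) = N"
  shows "distr M borel X = distr N borel fst"
  using assms by (subst assms(3)[symmetric], subst distr_distr) (simp_all add: comp_def)

lemma distr_snd_of_joint:
  assumes "X \<in> borel_measurable M" "Y \<in> borel_measurable M"
    and "distr M (borel \<Otimes>\<^sub>M borel) (\<lambda>\<omega>. (X \<omega>, Y \<omega>)) = N"
  shows "distr M borel Y = distr N borel snd"
  using assms by (subst assms(3)[symmetric], subst distr_distr) (simp_all add: comp_def)

lemma (in prob_space) prob_le_le_bivariate_std_normal: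
  assumes X: "random_variable borel X" and Y: "random_variable borel Y"
    and rho: "\<bar>rho\<bar> \<le> 1"
    and law: "distr M (borel \<Otimes>\<^sub>M borel) (\<lambda>\<omega>. (X \<omega>, Y \<omega>)) = bivariate_std_normal rho"
  shows "prob {\<omega>\<in>space M. X \<omega> \<le> u \<and> Y \<omega> \<le> v} = Psi u v rho"
    and "prob {\<omega>\<in>space M. X \<omega> \<le> u} * prob {\<omega>\<in>space M. Y \<omega> \<le> v} = Psi u v 0"
proof -
  have "(\<lambda>\<omega>. (X \<omega>, Y \<omega>)) -` ({..u} \<times> {..v}) \<inter> space M =
      {\<omega>\<in>space M. X \<omega> \<le> u \<and> Y \<omega> \<le> v}"
    by auto
  then show "prob {\<omega>\<in>space M. X \<omega> \<le> u \<and> Y \<omega> \<le> v} = Psi u v rho"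
    using X Y by (simp add: Psi_def law[symmetric] measure_distr)
  have "prob {\<omega>\<in>space M. X \<omega> \<le> u} = measure (distr M borel X) {..u}"
    using X by (simp add: measure_distr vimage_def Int_def conj_commute)
  moreover have "prob {\<omega>\<in>space M. Y \<omega> \<le> v} = measure (distr M borel Y) {..v}"
    using Y by (simp add: measure_distr vimage_def Int_def conj_commute)
  ultimately show
    "prob {\<omega>\<in>space M. X \<omega> \<le> u} * prob {\<omega>\<in>space M. Y \<omega> \<le> v} = Psi u v 0"
    using distr_fst_of_joint[OF X Y law] distr_snd_of_joint[OF X Y law] rho
    by (simp add: Psi_0 distr_bivariate_std_normal_fst distr_bivariate_std_normal_snd)
qed

lemma (in prob_space) prob_compl_Int_minus_mult:
  assumes "A \<in> events" "B \<in> events"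
  shows "prob ((space M - A) \<inter> (space M - B)) - prob (space M - A) * prob (space M - B) =
    prob (A \<inter> B) - prob A * prob B"
proof -
  have "prob (A \<union> B) = prob A + prob B - prob (A \<inter> B)"
    using assms by (simp add: measure_Un3 fmeasurable_eq_sets)
  moreover have "(space M - A) \<inter> (space M - B) = space M - (A \<union> B)"
    by blast
  ultimately show ?thesis
    using assms by (simp add: prob_compl algebra_simps)
qed

lemma (in prob_space) prob_upper_tails_bivariate_std_normal:
  assumes X: "random_variable borel X" and Y: "random_variable borel Y"
    and rho: "\<bar>rho\<bar> \<le> 1"
    and law: "distr M (borel \<Otimes>\<^sub>M borel) (\<lambda>\<omega>. (X \<omega>, Y \<omega>)) = bivariate_std_normal rho"
  shows "prob {\<omega>\<in>space M. u < X \<omega> \<and> v < Y \<omega>}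
      - prob {\<omega>\<in>space M. u < X \<omega>} * prob {\<omega>\<in>space M. v < Y \<omega>} = Psi u v rho - Psi u v 0"
proof -
  let ?E = "{\<omega>\<in>space M. X \<omega> \<le> u}" and ?F = "{\<omega>\<in>space M. Y \<omega> \<le> v}"
  have "?E \<in> events" "?F \<in> events"
    using X Y by measurable
  moreover have "{\<omega>\<in>space M. u < X \<omega> \<and> v < Y \<omega>} = (space M - ?E) \<inter> (space M - ?F)"
    "{\<omega>\<in>space M. u < X \<omega>} = space M - ?E" "{\<omega>\<in>space M. v < Y \<omega>} = space M - ?F"
    "?E \<inter> ?F = {\<omega>\<in>space M. X \<omega> \<le> u \<and> Y \<omega> \<le> v}"
    by auto
  ultimately show ?thesis
    using prob_le_le_bivariate_std_normal[OF X Y rho law] by (simp add: prob_compl_Int_minus_mult)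
qed

lemma covariance_eq_expectation:
  assumes "prob_space M" "integrable M X" "integrable M Y" "integrable M (\<lambda>\<omega>. X \<omega> * Y \<omega>)"
  shows "covariance M X Y = (\<integral>\<omega>. X \<omega> * Y \<omega> \<partial>M) - (\<integral>\<omega>. X \<omega> \<partial>M) * (\<integral>\<omega>. Y \<omega> \<partial>M)"
proof -
  interpret prob_space M by fact
  have "(\<lambda>\<omega>. (X \<omega> - expectation X) * (Y \<omega> - expectation Y)) =
      (\<lambda>\<omega>. (X \<omega> * Y \<omega> - expectation Y * X \<omega>)
        - (expectation X * Y \<omega> - expectation X * expectation Y))"
    by (auto simp: algebra_simps)
  then show ?thesis
    using assms by (simp add: covariance_def prob_space)
qed

lemma covariance_cong:
  assumes "\<And>\<omega>. \<omega> \<in> space M \<Longrightarrow> X \<omega> = X' \<omega>"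
    and "\<And>\<omega>. \<omega> \<in> space M \<Longrightarrow> Y \<omega> = Y' \<omega>"
  shows "covariance M X Y = covariance M X' Y'"
proof -
  have "(\<integral>\<omega>. X \<omega> \<partial>M) = (\<integral>\<omega>. X' \<omega> \<partial>M)" "(\<integral>\<omega>. Y \<omega> \<partial>M) = (\<integral>\<omega>. Y' \<omega> \<partial>M)"
    using assms by (auto intro: Bochner_Integration.integral_cong)
  then show ?thesis
    unfolding covariance_def using assms by (auto intro: Bochner_Integration.integral_cong)
qed

lemma (in prob_space) covariance_sum_indicator:
  assumes "finite I" "finite J" "A ` I \<subseteq> events" "B ` J \<subseteq> events"
  shows "covariance M (\<lambda>\<omega>. \<Sum>c\<in>I. indicator (A c) \<omega>) (\<lambda>\<omega>. \<Sum>d\<in>J. indicator (B d) \<omega>) =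
    (\<Sum>c\<in>I. \<Sum>d\<in>J. prob (A c \<inter> B d) - prob (A c) * prob (B d))"
proof -
  have integrable_indicator: "integrable M (indicator E :: 'a \<Rightarrow> real)" if "E \<in> events" for E
    using that by (intro integrable_real_indicator) (simp_all add: less_top[symmetric])
  have A: "A c \<in> events" if "c \<in> I" for c
    using assms that by blast
  have B: "B d \<in> events" if "d \<in> J" for d
    using assms that by blast
  have product: "(\<Sum>c\<in>I. indicator (A c) \<omega>) * (\<Sum>d\<in>J. indicator (B d) \<omega>) =
      (\<Sum>c\<in>I. \<Sum>d\<in>J. indicator (A c \<inter> B d) \<omega> :: real)" for \<omega>
    by (simp add: sum_product indicator_inter_arith)
  have "covariance M (\<lambda>\<omega>. \<Sum>c\<in>I. indicator (A c) \<omega>) (\<lambda>\<omega>. \<Sum>d\<in>J. indicator (B d) \<omega>) =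
      (\<Sum>c\<in>I. \<Sum>d\<in>J. prob (A c \<inter> B d)) - (\<Sum>c\<in>I. prob (A c)) * (\<Sum>d\<in>J. prob (B d))"
    using A B by (subst covariance_eq_expectation)
      (auto simp: prob_space_axioms product integrable_indicator integral_sum sets.Int)
  then show ?thesis
    by (simp add: sum_product sum_subtractf)
qed

lemma lift_Suc_mono_le_upto:
  fixes S :: "nat \<Rightarrow> 'a::order"
  assumes "\<And>c. c < m \<Longrightarrow> S c \<le> S (Suc c)" "c \<le> d" "d \<le> m"
  shows "S c \<le> S d"
proof -
  have "S (min n m) \<le> S (min (Suc n) m)" for n
    by (cases "n < m") (simp_all add: assms(1) min_def)
  then have "S (min c m) \<le> S (min d m)"
    using lift_Suc_mono_le[of "\<lambda>n. S (min n m)"] assms(2) by blast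
  then show ?thesis
    using assms by (simp add: min_def)
qed

lemma of_nat_category_eq_sum_indicator:
  assumes k: "k \<ge> 2" and S: "\<And>c. c + 1 \<le> k - 2 \<Longrightarrow> S c < S (c + 1)" and v: "v < k"
    and lower: "cutoff k S (int v - 1) < ereal x" and upper: "ereal x \<le> cutoff k S (int v)"
  shows "real v = (\<Sum>c\<le>k - 2. indicator {y. S c < y} x)"
proof -
  have mono: "S c \<le> S d" if "c \<le> d" "d \<le> k - 2" for c d
    using lift_Suc_mono_le_upto[of "k - 2" S] S that by (simp add: less_imp_le)
  have below: "{..k - 2} \<inter> {c. S c < x} = {..<v}"
  proof (intro set_eqI iffI)
    fix c
    assume c: "c \<in> {..k - 2} \<inter> {c. S c < x}"
    show "c \<in> {..<v}"
    proof (rule ccontr)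
      assume "c \<notin> {..<v}"
      then have "v \<le> c" "c \<le> k - 2"
        using c by auto
      then have "int v < int k - 1"
        using k by linarith
      then have "x \<le> S v"
        using upper by (simp add: cutoff_def)
      also have "S v \<le> S c"
        using mono \<open>v \<le> c\<close> \<open>c \<le> k - 2\<close> by blast
      finally show False
        using c by simp
    qed
  next
    fix c
    assume "c \<in> {..<v}"
    then have "c \<le> v - 1" "v - 1 \<le> k - 2" "0 < v"
      using v by auto
    moreover have "\<not> int k - 1 < int v" "nat (int v - 1) = v - 1"
      using v by auto
    ultimately have "S (v - 1) < x"
      using lower by (simp add: cutoff_def)
    then show "c \<in> {..k - 2} \<inter> {c. S c < x}"
      using mono \<open>c \<le> v - 1\<close> \<open>v - 1 \<le> k - 2\<close> by force
  qed
  then show ?thesis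
    by (simp add: sum.inter_filter indicator_def)
qed

theorem mainTheorem3:
  fixes M :: "'a measure"
    and Xi Xj :: "'a \<Rightarrow> real"
    and Vi Vj :: "'a \<Rightarrow> nat"
    and rho :: real
    and k g :: nat
    and Si Sj :: "nat \<Rightarrow> real"
  assumes "prob_space M"
    and "Xi \<in> borel_measurable M" and "Xj \<in> borel_measurable M"
    and "-1 \<le> rho" and "rho \<le> 1"
    and "distr M (borel \<Otimes>\<^sub>M borel) (\<lambda>\<omega>. (Xi \<omega>, Xj \<omega>)) = bivariate_std_normal rho"
    and "k \<ge> 2" and "g \<ge> 2"
    and "\<And>c. c + 1 \<le> k - 2 \<Longrightarrow> Si c < Si (c + 1)"
    and "\<And>d. d + 1 \<le> g - 2 \<Longrightarrow> Sj d < Sj (d + 1)"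
    and "\<And>\<omega>. \<omega> \<in> space M \<Longrightarrow> Vi \<omega> < k"
    and "\<And>\<omega>. \<omega> \<in> space M \<Longrightarrow> Vj \<omega> < g"
    and "\<And>\<omega> c. \<omega> \<in> space M \<Longrightarrow> c < k \<Longrightarrow>
           Vi \<omega> = c \<longleftrightarrow> cutoff k Si (int c - 1) < ereal (Xi \<omega>) \<and> ereal (Xi \<omega>) \<le> cutoff k Si (int c)"
    and "\<And>\<omega> d. \<omega> \<in> space M \<Longrightarrow> d < g \<Longrightarrow>
           Vj \<omega> = d \<longleftrightarrow> cutoff g Sj (int d - 1) < ereal (Xj \<omega>) \<and> ereal (Xj \<omega>) \<le> cutoff g Sj (int d)"
  shows "covariance M (\<lambda>\<omega>. real (Vi \<omega>)) (\<lambda>\<omega>. real (Vj \<omega>)) =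
         (\<Sum>ci\<le>k - 2. \<Sum>cj\<le>g - 2. Psi (Si ci) (Sj cj) rho - Psi (Si ci) (Sj cj) 0)"
proof -
  interpret prob_space M by fact
  note Xi = assms(2) and Xj = assms(3)
  define A where "A c = {\<omega>\<in>space M. Si c < Xi \<omega>}" for c
  define B where "B d = {\<omega>\<in>space M. Sj d < Xj \<omega>}" for d
  have events: "A c \<in> events" "B d \<in> events" for c d
    unfolding A_def B_def using Xi Xj by measurable
  have "covariance M (\<lambda>\<omega>. real (Vi \<omega>)) (\<lambda>\<omega>. real (Vj \<omega>)) =
      covariance M (\<lambda>\<omega>. \<Sum>c\<le>k - 2. indicator (A c) \<omega>) (\<lambda>\<omega>. \<Sum>d\<le>g - 2. indicator (B d) \<omega>)"
  proof (rule covariance_cong)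
    fix \<omega> assume \<omega>: "\<omega> \<in> space M"
    show "real (Vi \<omega>) = (\<Sum>c\<le>k - 2. indicator (A c) \<omega>)"
      using of_nat_category_eq_sum_indicator[of k Si "Vi \<omega>" "Xi \<omega>"] assms(7,9) \<omega>
        assms(13)[OF \<omega> assms(11)[OF \<omega>]] assms(11)[OF \<omega>]
      by (simp add: A_def indicator_def)
    show "real (Vj \<omega>) = (\<Sum>d\<le>g - 2. indicator (B d) \<omega>)"
      using of_nat_category_eq_sum_indicator[of g Sj "Vj \<omega>" "Xj \<omega>"] assms(8,10) \<omega>
        assms(14)[OF \<omega> assms(12)[OF \<omega>]] assms(12)[OF \<omega>]
      by (simp add: B_def indicator_def)
  qed
  also have "\<dots> = (\<Sum>c\<le>k - 2. \<Sum>d\<le>g - 2. prob (A c \<inter> B d) - prob (A c) * prob (B d))"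
    using events by (intro covariance_sum_indicator) auto
  also have "\<dots> = (\<Sum>c\<le>k - 2. \<Sum>d\<le>g - 2. Psi (Si c) (Sj d) rho - Psi (Si c) (Sj d) 0)"
  proof -
    have "A c \<inter> B d = {\<omega>\<in>space M. Si c < Xi \<omega> \<and> Sj d < Xj \<omega>}" for c d
      by (auto simp: A_def B_def)
    then show ?thesis
      using prob_upper_tails_bivariate_std_normal[OF Xi Xj _ assms(6)] assms(4,5)
      by (simp add: A_def B_def abs_le_iff)
  qed
  finally show ?thesis .
qed

end
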